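(* Let $f^i_m:\mathbb{R}^d\to\mathbb{R}$ ($m\in[M]$, $i\in[n]$) be differentiable, convex and $L$-smooth, with $f_m=\frac1n\sum_i f^i_m$, $f=\frac1M\sum_m f_m$, and let $x_*$ be a minimizer of $f$. Fix $x_t\in\mathbb{R}^d$ and $\gamma\le\frac{1}{2Ln}$. For each $m\in[M]$ let $\pi_m$ be a uniformly random permutation of $[n]$ and define $x^0_{t,m}=x_t$, $x^{i+1}_{t,m}=x^i_{t,m}-\gamma\nabla f_m^{\pi_m^i}(x^i_{t,m})$ for $i=0,\dots,n-1$. Then $$\frac{1}{Mn}\sum_{m=1}^M\sum_{i=0}^{n-1}\mathbb{E}\|x_t-x^i_{t,m}\|^2\le 8\gamma^2n^2L\big(f(x_t)-f(x_* )\big)+2\gamma^2n^2\frac1M\sum_{m=1}^M\|\nabla f_m(x_* )\|^2+2\gamma^2n\frac1M\sum_{m=1}^M\sigma_{*,m}^2,$$ where the expectation is over the permutations.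
   Context: $[k]=\{1,\dots,k\}$. $L$-smooth: $\|\nabla h(x)-\nabla h(y)\|\le L\|x-y\|$ for all $x,y$. $\sigma_{*,m}^2=\frac1n\sum_{i=1}^n\|\nabla f^i_m(x_* )\|^2$. Permutations $\pi_m=(\pi_m^0,\dots,\pi_m^{n-1})$ are indexed from $0$. *)

theory Defs
  imports "HOL-Probability.Probability"
begin

fun local_iter :: "real \<Rightarrow> (nat \<Rightarrow> 'a::real_normed_vector \<Rightarrow> 'a) \<Rightarrow> (nat \<Rightarrow> nat) \<Rightarrow> 'a \<Rightarrow> nat \<Rightarrow> 'a" where
  "local_iter \<gamma> g \<pi> x 0 = x"
| "local_iter \<gamma> g \<pi> x (Suc i) =
     local_iter \<gamma> g \<pi> x i - \<gamma> *\<^sub>R g (\<pi> i) (local_iter \<gamma> g \<pi> x i)"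

definition unif_perm :: "nat \<Rightarrow> (nat \<Rightarrow> nat) pmf" where
  "unif_perm n = pmf_of_set {\<pi>. \<pi> permutes {..<n}}"

end

theory Submission
  imports Defs
begin

text \<open>Fix a client and write \<open>a\<^sub>k\<close> for the gradients of its components at \<open>x\<^sub>t\<close>.
  Unrolling the recursion, \<open>x\<^sub>t - x\<^sup>i\<close> is \<open>\<gamma>\<close> times a sum of \<open>i\<close> gradients along the
  trajectory; replacing them by the \<open>a\<^bsub>\<pi> j\<^esub>\<close> costs a drift that \<open>\<gamma> L n \<le> 1/2\<close> lets us absorb,
  so the deviations are controlled by the prefix sums \<open>\<Sum>\<^bsub>j<i\<^esub> a\<^bsub>\<pi> j\<^esub>\<close>. Under a uniform
  permutation such a prefix is a sample without replacement, whose second moment is at most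
  \<open>(i/n) \<Sum> \<parallel>a\<^sub>k\<parallel>\<^sup>2 + (i/n)\<^sup>2 \<parallel>\<Sum> a\<^sub>k\<parallel>\<^sup>2\<close>. Finally co-coercivity of convex \<open>L\<close>-smooth
  functions bounds \<open>\<parallel>a\<^sub>k - \<nabla>f\<^sup>k(x\<^sub>*)\<parallel>\<^sup>2\<close> by \<open>2L\<close> times a Bregman divergence, and since the
  full gradient vanishes at \<open>x\<^sub>*\<close>, the averaged divergences equal \<open>f(x\<^sub>t) - f(x\<^sub>*)\<close>.\<close>

lemma norm_add_power2_le:
  fixes u v :: "'a::real_normed_vector"
  assumes "t > 0"
  shows "(norm (u + v))\<^sup>2 \<le> (1 + t) * (norm u)\<^sup>2 + (1 + 1 / t) * (norm v)\<^sup>2"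
proof -
  have "(norm (u + v))\<^sup>2 \<le> (norm u + norm v)\<^sup>2"
    by (simp add: norm_triangle_ineq power_mono)
  also have "\<dots> \<le> (1 + t) * (norm u)\<^sup>2 + (1 + 1 / t) * (norm v)\<^sup>2"
  proof -
    have "0 \<le> (t * norm u - norm v)\<^sup>2 / t"
      using assms by simp
    then show ?thesis
      using assms by (simp add: power2_eq_square field_simps)
  qed
  finally show ?thesis .
qed

lemma norm_sum_power2_le:
  fixes d :: "'b \<Rightarrow> 'a::real_normed_vector"
  shows "(norm (\<Sum>j\<in>I. d j))\<^sup>2 \<le> real (card I) * (\<Sum>j\<in>I. (norm (d j))\<^sup>2)"
proof -
  have "(norm (\<Sum>j\<in>I. d j))\<^sup>2 \<le> (\<Sum>j\<in>I. norm (d j))\<^sup>2"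
    by (simp add: norm_sum power_mono)
  also have "\<dots> \<le> (\<Sum>j\<in>I. (norm (d j))\<^sup>2) * real (card I)"
    by (rule sum_squared_le_sum_of_squares)
  finally show ?thesis
    by (simp add: mult.commute)
qed

lemma power2_norm_sum_eq:
  fixes b :: "'b \<Rightarrow> 'a::real_inner"
  assumes "finite I"
  shows "(norm (\<Sum>j\<in>I. b j))\<^sup>2 = (\<Sum>j\<in>I. (norm (b j))\<^sup>2) + (\<Sum>j\<in>I. \<Sum>k\<in>I - {j}. b j \<bullet> b k)"
proof -
  have "(norm (\<Sum>j\<in>I. b j))\<^sup>2 = (\<Sum>j\<in>I. \<Sum>k\<in>I. b j \<bullet> b k)"
    by (simp add: power2_norm_eq_inner inner_sum_left inner_sum_right) (rule sum.swap)
  also have "\<dots> = (\<Sum>j\<in>I. (norm (b j))\<^sup>2 + (\<Sum>k\<in>I - {j}. b j \<bullet> b k))"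
    using assms by (intro sum.cong refl) (simp add: sum.remove power2_norm_eq_inner)
  finally show ?thesis
    by (simp add: sum.distrib)
qed

lemma sum_lessThan_of_nat_real: "(\<Sum>i<n. real i) = real n * (real n - 1) / 2"
  by (induction n) (simp_all add: field_simps)

lemma sum_lessThan_power2_of_nat_real_le: "(\<Sum>i<n. (real i)\<^sup>2) \<le> real n ^ 3 / 3"
proof (induction n)
  case (Suc n)
  have "real n ^ 3 / 3 + (real n)\<^sup>2 \<le> real (Suc n) ^ 3 / 3"
    by (simp add: power2_eq_square power3_eq_cube field_simps)
  with Suc show ?case
    by simp
qed simp

lemma sum_prefix_weights_le:
  assumes "0 < n" and "0 \<le> B"
  shows "(\<Sum>i<n. real i / real n * A + (real i / real n)\<^sup>2 * B)
       \<le> (real n - 1) / 2 * A + real n / 3 * B"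
proof -
  have "(\<Sum>i<n. real i / real n * A + (real i / real n)\<^sup>2 * B)
      = (\<Sum>i<n. real i) / real n * A + (\<Sum>i<n. (real i)\<^sup>2) / (real n)\<^sup>2 * B"
    by (simp add: sum.distrib sum_distrib_right sum_divide_distrib power_divide)
  also have "(\<Sum>i<n. real i) / real n * A = (real n - 1) / 2 * A"
    using assms(1) by (simp add: sum_lessThan_of_nat_real)
  also have "(\<Sum>i<n. (real i)\<^sup>2) / (real n)\<^sup>2 \<le> real n / 3"
    using sum_lessThan_power2_of_nat_real_le[of n] assms(1)
    by (simp add: field_simps power2_eq_square power3_eq_cube)
  then have "(\<Sum>i<n. (real i)\<^sup>2) / (real n)\<^sup>2 * B \<le> real n / 3 * B"
    using assms(2) by (rule mult_right_mono)
  finally show ?thesis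
    by simp
qed

text \<open>For \<open>n \<le> 1\<close> the denominator vanishes and the fraction is \<open>0\<close>.\<close>
lemma prefix_pair_fraction_le:
  fixes i n :: nat
  assumes "i \<le> n"
  shows "0 \<le> real i * (real i - 1) / (real n * (real n - 1))"
    and "real i * (real i - 1) / (real n * (real n - 1)) \<le> (real i / real n)\<^sup>2"
proof -
  show "0 \<le> real i * (real i - 1) / (real n * (real n - 1))"
    by (cases i; cases n) simp_all
  show "real i * (real i - 1) / (real n * (real n - 1)) \<le> (real i / real n)\<^sup>2"
  proof (cases "n \<le> 1")
    case False
    then have "(real i - 1) / (real n - 1) \<le> real i / real n"
      using assms by (simp add: field_simps)
    then have "real i / real n * ((real i - 1) / (real n - 1)) \<le> real i / real n * (real i / real n)"
      by (intro mult_left_mono) auto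
    then show ?thesis
      by (simp add: power2_eq_square)
  qed (auto simp: le_Suc_eq)
qed

lemma shuffling_moment_combination_le:
  fixes n d A B \<sigma> N :: real
  assumes "1 \<le> n" "0 \<le> d" "0 \<le> \<sigma>" "0 \<le> N"
    and "A \<le> 6 * d + 3 / 2 * \<sigma>" "B \<le> 4 * n * d + 2 * N"
  shows "4 / 3 * (n - 1) * A + 8 / 9 * n * B \<le> 8 * n\<^sup>2 * d + 2 * n * N + 2 * n * \<sigma>"
proof -
  \<comment> \<open>completing the square in \<open>40/9 n\<^sup>2 - 8 n + 8\<close>\<close>
  have "0 \<le> (n - 9 / 10) * (n - 9 / 10)"
    by simp
  then have "8 * (n - 1) + 32 / 9 * n\<^sup>2 \<le> 8 * n\<^sup>2"
    unfolding power2_eq_square by (simp add: algebra_simps)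
  with \<open>0 \<le> d\<close> have coeff: "(8 * (n - 1) + 32 / 9 * n\<^sup>2) * d \<le> 8 * n\<^sup>2 * d"
    by (intro mult_right_mono) auto
  have "4 / 3 * (n - 1) * A \<le> 4 / 3 * (n - 1) * (6 * d + 3 / 2 * \<sigma>)"
    using assms by (intro mult_left_mono) auto
  moreover have "8 / 9 * n * B \<le> 8 / 9 * n * (4 * n * d + 2 * N)"
    using assms by (intro mult_left_mono) auto
  moreover have "0 \<le> n * N"
    using assms by simp
  ultimately show ?thesis
    using coeff \<open>0 \<le> \<sigma>\<close> unfolding power2_eq_square by (simp add: field_simps)
qed

section \<open>Convex functions with Lipschitz gradient\<close>

definition bregman :: "('a::real_inner \<Rightarrow> real) \<Rightarrow> ('a \<Rightarrow> 'a) \<Rightarrow> 'a \<Rightarrow> 'a \<Rightarrow> real" where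
  "bregman h G x y = h x - h y - G y \<bullet> (x - y)"

lemma has_real_derivative_along_line:
  fixes h :: "'a::real_inner \<Rightarrow> real"
  assumes "\<And>x. (h has_derivative (\<lambda>v. G x \<bullet> v)) (at x)"
  shows "((\<lambda>t. h (u + t *\<^sub>R v)) has_real_derivative (G (u + t *\<^sub>R v) \<bullet> v)) (at t)"
proof -
  have "((\<lambda>t. u + t *\<^sub>R v) has_derivative (\<lambda>s. s *\<^sub>R v)) (at t)"
    by (auto intro!: derivative_eq_intros)
  from has_derivative_compose[OF this assms]
  have "((\<lambda>t. h (u + t *\<^sub>R v)) has_derivative (\<lambda>s. s * (G (u + t *\<^sub>R v) \<bullet> v))) (at t)"
    by (simp add: o_def)
  then show ?thesis
    by (simp only: has_field_derivative_def mult_commute_abs)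
qed

lemma convex_on_gradient_ineq:
  fixes h :: "'a::real_inner \<Rightarrow> real"
  assumes "convex_on UNIV h" and "\<And>x. (h has_derivative (\<lambda>v. G x \<bullet> v)) (at x)"
  shows "h y + G y \<bullet> (z - y) \<le> h z"
proof -
  define \<psi> where "\<psi> t = h (y + t *\<^sub>R (z - y))" for t
  have "convex_on UNIV \<psi>"
  proof (rule convex_onI)
    fix t a b :: real
    assume "0 < t" "t < 1"
    have "y + ((1 - t) *\<^sub>R a + t *\<^sub>R b) *\<^sub>R (z - y)
        = (1 - t) *\<^sub>R (y + a *\<^sub>R (z - y)) + t *\<^sub>R (y + b *\<^sub>R (z - y))"
      by (simp add: algebra_simps)
    with \<open>0 < t\<close> \<open>t < 1\<close> show "\<psi> ((1 - t) *\<^sub>R a + t *\<^sub>R b) \<le> (1 - t) * \<psi> a + t * \<psi> b"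
      unfolding \<psi>_def using convex_onD[OF assms(1), of t] by simp
  qed simp
  moreover have "(\<psi> has_real_derivative (G y \<bullet> (z - y))) (at 0)"
    using has_real_derivative_along_line[OF assms(2), of y "z - y" 0] by (simp add: \<psi>_def[abs_def])
  ultimately have "G y \<bullet> (z - y) * (1 - 0) \<le> \<psi> 1 - \<psi> 0"
    by (intro convex_on_imp_above_tangent[where A = UNIV]) auto
  then show ?thesis
    by (simp add: \<psi>_def)
qed

lemma bregman_nonneg:
  fixes h :: "'a::real_inner \<Rightarrow> real"
  assumes "convex_on UNIV h" and "\<And>x. (h has_derivative (\<lambda>v. G x \<bullet> v)) (at x)"
  shows "0 \<le> bregman h G x y"
  using convex_on_gradient_ineq[OF assms, of y x] by (simp add: bregman_def)

lemma bregman_eq_gap_at_minimum: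
  fixes F :: "'a::real_inner \<Rightarrow> real"
  assumes "(F has_derivative (\<lambda>v. G x \<bullet> v)) (at x)" and "\<And>y. F x \<le> F y"
  shows "bregman F G y x = F y - F x"
proof -
  have "(\<lambda>v. G x \<bullet> v) = (\<lambda>v. 0)"
    using assms by (intro differential_zero_maxmin[of x UNIV]) auto
  then have "G x = 0"
    by (metis inner_eq_zero_iff)
  then show ?thesis
    by (simp add: bregman_def)
qed

lemma lipschitz_gradient_upper_bound:
  fixes h :: "'a::real_inner \<Rightarrow> real"
  assumes deriv: "\<And>x. (h has_derivative (\<lambda>v. G x \<bullet> v)) (at x)"
    and lipschitz: "\<And>x y. norm (G x - G y) \<le> L * norm (x - y)"
  shows "h (u + v) \<le> h u + G u \<bullet> v + L / 2 * (norm v)\<^sup>2"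
proof -
  define \<phi> where "\<phi> t = h (u + t *\<^sub>R v) - t * (G u \<bullet> v) - L / 2 * t\<^sup>2 * (norm v)\<^sup>2" for t
  have deriv_\<phi>: "(\<phi> has_real_derivative (G (u + t *\<^sub>R v) - G u) \<bullet> v - L * t * (norm v)\<^sup>2) (at t)"
    for t
    unfolding \<phi>_def inner_diff_left
    by (rule derivative_eq_intros has_real_derivative_along_line[OF deriv] | simp)+
  have nonpos: "(G (u + t *\<^sub>R v) - G u) \<bullet> v - L * t * (norm v)\<^sup>2 \<le> 0" if "0 \<le> t" for t
  proof -
    have "(G (u + t *\<^sub>R v) - G u) \<bullet> v \<le> norm (G (u + t *\<^sub>R v) - G u) * norm v"
      by (rule norm_cauchy_schwarz)
    also have "\<dots> \<le> L * norm (t *\<^sub>R v) * norm v"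
      using lipschitz[of "u + t *\<^sub>R v" u] by (simp add: mult_right_mono)
    finally show ?thesis
      using that by (simp add: power2_eq_square mult.assoc)
  qed
  have "\<phi> 1 \<le> \<phi> 0"
  proof (rule DERIV_nonpos_imp_nonincreasing[of 0 1])
    fix t :: real
    assume "0 \<le> t" "t \<le> 1"
    with deriv_\<phi> nonpos show "\<exists>y. DERIV \<phi> t :> y \<and> y \<le> 0"
      by blast
  qed simp
  then show ?thesis
    by (simp add: \<phi>_def)
qed

text \<open>Co-coercivity: compare the descent step from \<open>x\<close> along \<open>-(G x - G y) / L\<close> with the
  gradient inequality at \<open>y\<close>.\<close>
lemma norm_gradient_diff_power2_le_bregman:
  fixes h :: "'a::real_inner \<Rightarrow> real"
  assumes "convex_on UNIV h" and deriv: "\<And>x. (h has_derivative (\<lambda>v. G x \<bullet> v)) (at x)"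
    and lipschitz: "\<And>x y. norm (G x - G y) \<le> L * norm (x - y)" and "L > 0"
  shows "(norm (G x - G y))\<^sup>2 \<le> 2 * L * bregman h G x y"
proof -
  define w where "w = G x - G y"
  define v where "v = - (1 / L) *\<^sub>R w"
  have "h y + G y \<bullet> (x + v - y) \<le> h (x + v)"
    by (rule convex_on_gradient_ineq[OF assms(1) deriv])
  also have "\<dots> \<le> h x + G x \<bullet> v + L / 2 * (norm v)\<^sup>2"
    by (rule lipschitz_gradient_upper_bound[OF deriv lipschitz])
  finally have "G y \<bullet> (x - y) - h x + h y \<le> w \<bullet> v + L / 2 * (norm v)\<^sup>2"
    by (simp add: w_def inner_diff_left inner_diff_right inner_add_right)
  also have "\<dots> = - (norm w)\<^sup>2 / (2 * L)"
    using \<open>L > 0\<close> by (simp add: v_def dot_square_norm power2_eq_square field_simps)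
  finally show ?thesis
    using \<open>L > 0\<close> by (simp add: w_def bregman_def field_simps)
qed

lemma gradient_moments_le_bregman:
  fixes h :: "nat \<Rightarrow> 'a::real_inner \<Rightarrow> real" and G :: "nat \<Rightarrow> 'a \<Rightarrow> 'a"
  assumes deriv: "\<And>k x. k < n \<Longrightarrow> (h k has_derivative (\<lambda>v. G k x \<bullet> v)) (at x)"
    and convex: "\<And>k. k < n \<Longrightarrow> convex_on UNIV (h k)"
    and lipschitz: "\<And>k x y. k < n \<Longrightarrow> norm (G k x - G k y) \<le> L * norm (x - y)"
    and "L > 0"
  shows "(\<Sum>k<n. (norm (G k x))\<^sup>2)
       \<le> 6 * L * (\<Sum>k<n. bregman (h k) (G k) x y) + 3 / 2 * (\<Sum>k<n. (norm (G k y))\<^sup>2)"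
    and "(norm (\<Sum>k<n. G k x))\<^sup>2
       \<le> 4 * real n * L * (\<Sum>k<n. bregman (h k) (G k) x y) + 2 * (norm (\<Sum>k<n. G k y))\<^sup>2"
proof -
  define D where "D = (\<Sum>k<n. bregman (h k) (G k) x y)"
  have gradient_diff: "(\<Sum>k<n. (norm (G k x - G k y))\<^sup>2) \<le> 2 * L * D"
    unfolding D_def sum_distrib_left
    using norm_gradient_diff_power2_le_bregman[OF convex deriv lipschitz \<open>L > 0\<close>]
    by (intro sum_mono) auto
  have "(\<Sum>k<n. (norm (G k x))\<^sup>2) \<le> (\<Sum>k<n. 3 * (norm (G k x - G k y))\<^sup>2 + 3 / 2 * (norm (G k y))\<^sup>2)"
  proof (rule sum_mono)
    fix k
    show "(norm (G k x))\<^sup>2 \<le> 3 * (norm (G k x - G k y))\<^sup>2 + 3 / 2 * (norm (G k y))\<^sup>2"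
      using norm_add_power2_le[of 2 "G k x - G k y" "G k y"] by simp
  qed
  with gradient_diff show "(\<Sum>k<n. (norm (G k x))\<^sup>2) \<le> 6 * L * D + 3 / 2 * (\<Sum>k<n. (norm (G k y))\<^sup>2)"
    by (simp add: sum.distrib sum_distrib_left[symmetric] sum_divide_distrib[symmetric])
  have "(norm (\<Sum>k<n. G k x))\<^sup>2 \<le> 2 * (norm (\<Sum>k<n. G k x - G k y))\<^sup>2 + 2 * (norm (\<Sum>k<n. G k y))\<^sup>2"
    using norm_add_power2_le[of 1 "\<Sum>k<n. G k x - G k y" "\<Sum>k<n. G k y"]
    by (simp add: sum_subtractf)
  also have "(norm (\<Sum>k<n. G k x - G k y))\<^sup>2 \<le> real n * (2 * L * D)"
    using norm_sum_power2_le[of "\<lambda>k. G k x - G k y" "{..<n}"] gradient_diff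
    by (simp add: mult_left_mono order_trans)
  finally show "(norm (\<Sum>k<n. G k x))\<^sup>2 \<le> 4 * real n * L * D + 2 * (norm (\<Sum>k<n. G k y))\<^sup>2"
    by simp
qed

section \<open>Uniformly random permutations\<close>

lemma set_pmf_unif_perm [simp]: "set_pmf (unif_perm n) = {\<pi>. \<pi> permutes {..<n}}"
  unfolding unif_perm_def by (rule set_pmf_of_set) (auto intro: permutes_id finite_permutations)

lemma integrable_unif_perm [simp]:
  fixes F :: "(nat \<Rightarrow> nat) \<Rightarrow> real"
  shows "integrable (measure_pmf (unif_perm n)) F"
  by (rule integrable_measure_pmf_finite) (simp add: finite_permutations)

lemma expectation_unif_perm:
  fixes F :: "(nat \<Rightarrow> nat) \<Rightarrow> real"
  shows "measure_pmf.expectation (unif_perm n) F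
     = (\<Sum>\<pi>\<in>{\<pi>. \<pi> permutes {..<n}}. F \<pi>) / real (card {\<pi>. \<pi> permutes {..<n}})"
  unfolding unif_perm_def
  by (rule integral_pmf_of_set) (auto intro: permutes_id finite_permutations)

lemma expectation_unif_perm_compose_right:
  fixes F :: "(nat \<Rightarrow> nat) \<Rightarrow> real"
  assumes "q permutes {..<n}"
  shows "measure_pmf.expectation (unif_perm n) (\<lambda>\<pi>. F (\<pi> \<circ> q))
       = measure_pmf.expectation (unif_perm n) F"
  unfolding expectation_unif_perm using sum_permutations_compose_right[OF assms, of F] by simp

lemma expectation_unif_perm_const_of_permutes:
  fixes F :: "(nat \<Rightarrow> nat) \<Rightarrow> real"
  assumes "\<And>\<pi>. \<pi> permutes {..<n} \<Longrightarrow> F \<pi> = c"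
  shows "measure_pmf.expectation (unif_perm n) F = c"
proof -
  have "measure_pmf.expectation (unif_perm n) F = measure_pmf.expectation (unif_perm n) (\<lambda>_. c)"
    by (intro integral_cong_AE AE_pmfI) (auto simp: assms)
  then show ?thesis
    by simp
qed

lemma expectation_unif_perm_apply:
  fixes h :: "nat \<Rightarrow> real"
  assumes "j < n"
  shows "real n * measure_pmf.expectation (unif_perm n) (\<lambda>\<pi>. h (\<pi> j)) = (\<Sum>p<n. h p)"
proof -
  let ?E = "measure_pmf.expectation (unif_perm n)"
  have same: "?E (\<lambda>\<pi>. h (\<pi> k)) = ?E (\<lambda>\<pi>. h (\<pi> j))" if "k < n" for k
  proof -
    have "Transposition.transpose k j permutes {..<n}"
      using that assms by (intro permutes_swap_id) auto
    from expectation_unif_perm_compose_right[OF this, of "\<lambda>\<pi>. h (\<pi> k)"] show ?thesis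
      by simp
  qed
  have "real n * ?E (\<lambda>\<pi>. h (\<pi> j)) = (\<Sum>k<n. ?E (\<lambda>\<pi>. h (\<pi> k)))"
    using same by simp
  also have "\<dots> = ?E (\<lambda>\<pi>. \<Sum>k<n. h (\<pi> k))"
    by simp
  also have "\<dots> = (\<Sum>p<n. h p)"
    by (rule expectation_unif_perm_const_of_permutes) (metis sum.permute comp_apply sum.cong)
  finally show ?thesis .
qed

lemma expectation_unif_perm_apply_pair:
  fixes h :: "nat \<Rightarrow> nat \<Rightarrow> real"
  assumes "j < n" "k < n" "j \<noteq> k"
  shows "real n * (real n - 1) * measure_pmf.expectation (unif_perm n) (\<lambda>\<pi>. h (\<pi> j) (\<pi> k))
       = (\<Sum>p<n. \<Sum>q<n. h p q) - (\<Sum>p<n. h p p)"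
proof -
  let ?E = "measure_pmf.expectation (unif_perm n)"
  have same: "?E (\<lambda>\<pi>. h (\<pi> j') (\<pi> k')) = ?E (\<lambda>\<pi>. h (\<pi> j) (\<pi> k))"
    if "j' < n" "k' < n" "j' \<noteq> k'" for j' k'
  proof -
    define t where "t = Transposition.transpose j' j"
    define u where "u = Transposition.transpose (t k') k"
    have t: "t permutes {..<n}"
      using that assms by (simp add: t_def permutes_swap_id)
    then have "t k' < n"
      using permutes_in_image[OF t, of k'] that by simp
    have "t k' \<noteq> j"
      using that by (metis t_def transpose_apply_second transpose_involutory)
    have "u \<circ> t permutes {..<n}"
      using t \<open>t k' < n\<close> assms by (auto simp: u_def intro: permutes_compose permutes_swap_id)
    moreover have "u (t j') = j" "u (t k') = k"
      using \<open>t k' \<noteq> j\<close> assms by (simp_all add: t_def u_def)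
    ultimately show ?thesis
      using expectation_unif_perm_compose_right[of "u \<circ> t" n "\<lambda>\<pi>. h (\<pi> j') (\<pi> k')"]
      by simp
  qed
  have "real n * (real n - 1) * ?E (\<lambda>\<pi>. h (\<pi> j) (\<pi> k))
      = (\<Sum>j'<n. \<Sum>k'\<in>{..<n} - {j'}. ?E (\<lambda>\<pi>. h (\<pi> j) (\<pi> k)))"
    using assms by (simp add: of_nat_diff)
  also have "\<dots> = (\<Sum>j'<n. \<Sum>k'\<in>{..<n} - {j'}. ?E (\<lambda>\<pi>. h (\<pi> j') (\<pi> k')))"
    using same by (intro sum.cong refl) auto
  also have "\<dots> = ?E (\<lambda>\<pi>. \<Sum>j'<n. (\<Sum>k'<n. h (\<pi> j') (\<pi> k')) - h (\<pi> j') (\<pi> j'))"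
    by (simp add: sum_diff1)
  also have "\<dots> = (\<Sum>p<n. \<Sum>q<n. h p q) - (\<Sum>p<n. h p p)"
  proof (rule expectation_unif_perm_const_of_permutes)
    fix \<pi> :: "nat \<Rightarrow> nat"
    assume \<pi>: "\<pi> permutes {..<n}"
    have reindex: "(\<Sum>k<n. g (\<pi> k)) = (\<Sum>p<n. g p)" for g :: "nat \<Rightarrow> real"
      using sum.permute[OF \<pi>, of g] by (simp add: o_def)
    show "(\<Sum>j'<n. (\<Sum>k'<n. h (\<pi> j') (\<pi> k')) - h (\<pi> j') (\<pi> j'))
        = (\<Sum>p<n. \<Sum>q<n. h p q) - (\<Sum>p<n. h p p)"
      by (simp add: sum_subtractf reindex[of "\<lambda>q. h _ q"] reindex[of "\<lambda>p. \<Sum>q<n. h p q"]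
          reindex[of "\<lambda>p. h p p"])
  qed
  finally show ?thesis .
qed

text \<open>A prefix of a uniformly random permutation is a sample without replacement: each of
  its \<open>i (i - 1)\<close> ordered pairs of positions is a uniformly random pair of distinct indices.\<close>
lemma expectation_power2_norm_prefix_sum_le:
  fixes a :: "nat \<Rightarrow> 'a::real_inner"
  assumes "i \<le> n"
  shows "measure_pmf.expectation (unif_perm n) (\<lambda>\<pi>. (norm (\<Sum>j<i. a (\<pi> j)))\<^sup>2)
       \<le> real i / real n * (\<Sum>p<n. (norm (a p))\<^sup>2) + (real i / real n)\<^sup>2 * (norm (\<Sum>p<n. a p))\<^sup>2"
proof -
  let ?E = "measure_pmf.expectation (unif_perm n)"
  define A where "A = (\<Sum>p<n. (norm (a p))\<^sup>2)"
  define B where "B = (norm (\<Sum>p<n. a p))\<^sup>2"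
  define c where "c = real i * (real i - 1) / (real n * (real n - 1))"
  have single: "?E (\<lambda>\<pi>. (norm (a (\<pi> j)))\<^sup>2) = A / real n" if "j < i" for j
    using expectation_unif_perm_apply[of j n "\<lambda>p. (norm (a p))\<^sup>2"] that assms
    by (simp add: A_def field_simps)
  have pair: "?E (\<lambda>\<pi>. a (\<pi> j) \<bullet> a (\<pi> k)) = (B - A) / (real n * (real n - 1))"
    if "j < i" "k < i" "j \<noteq> k" for j k
  proof -
    have "real n * (real n - 1) > 0"
      using that assms by auto
    moreover have "B = (\<Sum>p<n. \<Sum>q<n. a p \<bullet> a q)"
      by (simp add: B_def power2_norm_eq_inner inner_sum_left inner_sum_right) (rule sum.swap)
    ultimately show ?thesis
      using expectation_unif_perm_apply_pair[of j n k "\<lambda>p q. a p \<bullet> a q"] that assms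
      by (simp add: A_def power2_norm_eq_inner field_simps)
  qed
  have "?E (\<lambda>\<pi>. (norm (\<Sum>j<i. a (\<pi> j)))\<^sup>2)
      = (\<Sum>j<i. ?E (\<lambda>\<pi>. (norm (a (\<pi> j)))\<^sup>2))
        + (\<Sum>j<i. \<Sum>k\<in>{..<i} - {j}. ?E (\<lambda>\<pi>. a (\<pi> j) \<bullet> a (\<pi> k)))"
    by (simp add: power2_norm_sum_eq)
  also have "\<dots> = real i * (A / real n) + real i * (real i - 1) * ((B - A) / (real n * (real n - 1)))"
    using single pair by (simp add: of_nat_diff)
  also have "\<dots> = real i / real n * A + c * (B - A)"
    by (simp add: c_def)
  also have "c * (B - A) \<le> (real i / real n)\<^sup>2 * B"
  proof -
    have "0 \<le> A" "0 \<le> B"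
      by (simp_all add: A_def B_def sum_nonneg)
    moreover have "0 \<le> c"
      unfolding c_def by (rule prefix_pair_fraction_le(1)[OF assms])
    ultimately have "c * (B - A) \<le> c * B"
      by (simp add: right_diff_distrib)
    also have "\<dots> \<le> (real i / real n)\<^sup>2 * B"
      using prefix_pair_fraction_le(2)[OF assms] \<open>0 \<le> B\<close> unfolding c_def by (rule mult_right_mono)
    finally show ?thesis .
  qed
  finally show ?thesis
    by (simp add: A_def B_def)
qed

section \<open>Local shuffling iterates\<close>

lemma local_iter_eq_sum:
  "local_iter \<gamma> G \<pi> x i = x - \<gamma> *\<^sub>R (\<Sum>j<i. G (\<pi> j) (local_iter \<gamma> G \<pi> x j))"
  by (induction i) (simp_all add: algebra_simps)

lemma power2_norm_local_iter_deviation_le: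
  fixes G :: "nat \<Rightarrow> 'a::real_normed_vector \<Rightarrow> 'a"
  assumes lipschitz: "\<And>j x y. j < i \<Longrightarrow> norm (G (\<pi> j) x - G (\<pi> j) y) \<le> L * norm (x - y)"
  shows "(norm (x - local_iter \<gamma> G \<pi> x i))\<^sup>2
       \<le> 2 * \<gamma>\<^sup>2 * L\<^sup>2 * real i * (\<Sum>j<i. (norm (x - local_iter \<gamma> G \<pi> x j))\<^sup>2)
         + 2 * \<gamma>\<^sup>2 * (norm (\<Sum>j<i. G (\<pi> j) x))\<^sup>2"
proof -
  let ?x = "local_iter \<gamma> G \<pi> x"
  define d where "d j = G (\<pi> j) (?x j) - G (\<pi> j) x" for j
  have d: "(norm (d j))\<^sup>2 \<le> L\<^sup>2 * (norm (x - ?x j))\<^sup>2" if "j < i" for j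
  proof -
    have "norm (d j) \<le> L * norm (x - ?x j)"
      using lipschitz[OF that] by (simp add: d_def norm_minus_commute)
    then show ?thesis
      by (metis norm_ge_zero power_mono power_mult_distrib)
  qed
  have "(norm (\<Sum>j<i. d j))\<^sup>2 \<le> real i * (\<Sum>j<i. (norm (d j))\<^sup>2)"
    using norm_sum_power2_le[of d "{..<i}"] by simp
  also have "\<dots> \<le> real i * (L\<^sup>2 * (\<Sum>j<i. (norm (x - ?x j))\<^sup>2))"
    using d by (intro mult_left_mono) (auto simp: sum_distrib_left intro: sum_mono)
  finally have drift: "(norm (\<Sum>j<i. d j))\<^sup>2 \<le> real i * (L\<^sup>2 * (\<Sum>j<i. (norm (x - ?x j))\<^sup>2))" .
  have "x - ?x i = \<gamma> *\<^sub>R ((\<Sum>j<i. d j) + (\<Sum>j<i. G (\<pi> j) x))"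
    by (subst local_iter_eq_sum) (simp add: d_def sum_subtractf)
  then have "(norm (x - ?x i))\<^sup>2 = \<gamma>\<^sup>2 * (norm ((\<Sum>j<i. d j) + (\<Sum>j<i. G (\<pi> j) x)))\<^sup>2"
    by (simp add: power_mult_distrib)
  also have "\<dots> \<le> \<gamma>\<^sup>2 * (2 * (norm (\<Sum>j<i. d j))\<^sup>2 + 2 * (norm (\<Sum>j<i. G (\<pi> j) x))\<^sup>2)"
    using norm_add_power2_le[of 1] by (intro mult_left_mono) auto
  also have "\<dots> \<le> \<gamma>\<^sup>2 * (2 * (real i * (L\<^sup>2 * (\<Sum>j<i. (norm (x - ?x j))\<^sup>2)))
                     + 2 * (norm (\<Sum>j<i. G (\<pi> j) x))\<^sup>2)"
    using drift by (intro mult_left_mono) auto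
  finally show ?thesis
    by (simp add: algebra_simps)
qed

text \<open>The drift terms of all steps are absorbed into the left-hand side, which is where
  \<open>\<gamma> L n \<le> 1/2\<close> is needed.\<close>
lemma sum_power2_norm_local_iter_deviation_le:
  fixes G :: "nat \<Rightarrow> 'a::real_normed_vector \<Rightarrow> 'a"
  assumes lipschitz: "\<And>j x y. j < n \<Longrightarrow> norm (G (\<pi> j) x - G (\<pi> j) y) \<le> L * norm (x - y)"
    and "0 \<le> \<gamma>" "0 \<le> L" "\<gamma> * L * real n \<le> 1 / 2"
  shows "(\<Sum>i<n. (norm (x - local_iter \<gamma> G \<pi> x i))\<^sup>2)
       \<le> 8 / 3 * \<gamma>\<^sup>2 * (\<Sum>i<n. (norm (\<Sum>j<i. G (\<pi> j) x))\<^sup>2)"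
proof -
  define e where "e i = (norm (x - local_iter \<gamma> G \<pi> x i))\<^sup>2" for i
  define W where "W = (\<Sum>i<n. (norm (\<Sum>j<i. G (\<pi> j) x))\<^sup>2)"
  define S where "S = (\<Sum>i<n. e i)"
  have "0 \<le> S"
    by (simp add: S_def e_def sum_nonneg)
  have "e i \<le> 2 * \<gamma>\<^sup>2 * L\<^sup>2 * real i * S + 2 * \<gamma>\<^sup>2 * (norm (\<Sum>j<i. G (\<pi> j) x))\<^sup>2"
    if "i < n" for i
  proof -
    have "(\<Sum>j<i. e j) \<le> S"
      using that by (auto simp: S_def e_def intro: sum_mono2)
    then have "2 * \<gamma>\<^sup>2 * L\<^sup>2 * real i * (\<Sum>j<i. e j) \<le> 2 * \<gamma>\<^sup>2 * L\<^sup>2 * real i * S"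
      by (intro mult_left_mono) auto
    with power2_norm_local_iter_deviation_le[of i G \<pi> L x \<gamma>] lipschitz that show ?thesis
      by (simp add: e_def)
  qed
  then have "S \<le> (\<Sum>i<n. 2 * \<gamma>\<^sup>2 * L\<^sup>2 * real i * S + 2 * \<gamma>\<^sup>2 * (norm (\<Sum>j<i. G (\<pi> j) x))\<^sup>2)"
    unfolding S_def by (intro sum_mono) auto
  also have "\<dots> = \<gamma>\<^sup>2 * L\<^sup>2 * real n * (real n - 1) * S + 2 * \<gamma>\<^sup>2 * W"
    by (simp add: W_def sum.distrib sum_distrib_left[symmetric] sum_distrib_right[symmetric]
        sum_lessThan_of_nat_real)
  also have "\<gamma>\<^sup>2 * L\<^sup>2 * real n * (real n - 1) * S \<le> (\<gamma> * L * real n)\<^sup>2 * S"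
    using \<open>0 \<le> S\<close> \<open>0 \<le> \<gamma>\<close> \<open>0 \<le> L\<close>
    by (intro mult_right_mono) (auto simp: power2_eq_square algebra_simps)
  also have "(\<gamma> * L * real n)\<^sup>2 * S \<le> 1 / 4 * S"
  proof -
    have "(\<gamma> * L * real n)\<^sup>2 \<le> (1 / 2)\<^sup>2"
      using assms by (intro power_mono) auto
    with \<open>0 \<le> S\<close> show ?thesis
      by (intro mult_right_mono) (auto simp: power2_eq_square)
  qed
  finally show ?thesis
    by (simp add: S_def e_def W_def)
qed

lemma sum_expectation_local_iter_deviation_le:
  fixes G :: "nat \<Rightarrow> 'a::real_inner \<Rightarrow> 'a"
  assumes lipschitz: "\<And>k x y. k < n \<Longrightarrow> norm (G k x - G k y) \<le> L * norm (x - y)"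
    and "0 \<le> \<gamma>" "0 \<le> L" "\<gamma> * L * real n \<le> 1 / 2" "0 < n"
  shows "(\<Sum>i<n. measure_pmf.expectation (unif_perm n)
             (\<lambda>\<pi>. (norm (x - local_iter \<gamma> G \<pi> x i))\<^sup>2))
       \<le> \<gamma>\<^sup>2 * (4 / 3 * (real n - 1) * (\<Sum>k<n. (norm (G k x))\<^sup>2)
                + 8 / 9 * real n * (norm (\<Sum>k<n. G k x))\<^sup>2)"
proof -
  let ?E = "measure_pmf.expectation (unif_perm n)"
  define A where "A = (\<Sum>k<n. (norm (G k x))\<^sup>2)"
  define B where "B = (norm (\<Sum>k<n. G k x))\<^sup>2"
  have "0 \<le> B"
    by (simp add: B_def)
  have "(\<Sum>i<n. ?E (\<lambda>\<pi>. (norm (x - local_iter \<gamma> G \<pi> x i))\<^sup>2))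
      = ?E (\<lambda>\<pi>. \<Sum>i<n. (norm (x - local_iter \<gamma> G \<pi> x i))\<^sup>2)"
    by simp
  also have "\<dots> \<le> ?E (\<lambda>\<pi>. 8 / 3 * \<gamma>\<^sup>2 * (\<Sum>i<n. (norm (\<Sum>j<i. G (\<pi> j) x))\<^sup>2))"
  proof (intro integral_mono_AE AE_pmfI)
    fix \<pi>
    assume "\<pi> \<in> set_pmf (unif_perm n)"
    then have "\<pi> j < n" if "j < n" for j
      using permutes_in_image[of \<pi> "{..<n}" j] that by simp
    with lipschitz assms(2-4) show "(\<Sum>i<n. (norm (x - local_iter \<gamma> G \<pi> x i))\<^sup>2)
        \<le> 8 / 3 * \<gamma>\<^sup>2 * (\<Sum>i<n. (norm (\<Sum>j<i. G (\<pi> j) x))\<^sup>2)"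
      by (intro sum_power2_norm_local_iter_deviation_le) auto
  qed simp_all
  also have "\<dots> = 8 / 3 * \<gamma>\<^sup>2 * (\<Sum>i<n. ?E (\<lambda>\<pi>. (norm (\<Sum>j<i. G (\<pi> j) x))\<^sup>2))"
    by simp
  also have "\<dots> \<le> 8 / 3 * \<gamma>\<^sup>2 * (\<Sum>i<n. real i / real n * A + (real i / real n)\<^sup>2 * B)"
    using expectation_power2_norm_prefix_sum_le[of _ n "\<lambda>k. G k x"]
    by (intro mult_left_mono sum_mono) (auto simp: A_def B_def)
  also have "\<dots> \<le> 8 / 3 * \<gamma>\<^sup>2 * ((real n - 1) / 2 * A + real n / 3 * B)"
    using sum_prefix_weights_le[OF \<open>0 < n\<close> \<open>0 \<le> B\<close>] by (intro mult_left_mono) auto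
  also have "\<dots> = \<gamma>\<^sup>2 * (4 / 3 * (real n - 1) * A + 8 / 9 * real n * B)"
    by (simp add: field_simps)
  finally show ?thesis
    by (simp add: A_def B_def)
qed

lemma expectation_local_iter_deviation_le_bregman:
  fixes h :: "nat \<Rightarrow> 'a::real_inner \<Rightarrow> real" and G :: "nat \<Rightarrow> 'a \<Rightarrow> 'a"
  assumes deriv: "\<And>k x. k < n \<Longrightarrow> (h k has_derivative (\<lambda>v. G k x \<bullet> v)) (at x)"
    and convex: "\<And>k. k < n \<Longrightarrow> convex_on UNIV (h k)"
    and lipschitz: "\<And>k x y. k < n \<Longrightarrow> norm (G k x - G k y) \<le> L * norm (x - y)"
    and "L > 0" "0 \<le> \<gamma>" "\<gamma> * L * real n \<le> 1 / 2"
  shows "(1 / real n) * (\<Sum>i<n. measure_pmf.expectation (unif_perm n)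
             (\<lambda>\<pi>. (norm (x - local_iter \<gamma> G \<pi> x i))\<^sup>2))
       \<le> 8 * \<gamma>\<^sup>2 * (real n)\<^sup>2 * L * ((1 / real n) * (\<Sum>k<n. bregman (h k) (G k) x y))
         + 2 * \<gamma>\<^sup>2 * (real n)\<^sup>2 * (norm ((1 / real n) *\<^sub>R (\<Sum>k<n. G k y)))\<^sup>2
         + 2 * \<gamma>\<^sup>2 * real n * ((1 / real n) * (\<Sum>k<n. (norm (G k y))\<^sup>2))"
proof (cases "n = 0")
  case False
  define D where "D = (\<Sum>k<n. bregman (h k) (G k) x y)"
  define A where "A = (\<Sum>k<n. (norm (G k x))\<^sup>2)"
  define B where "B = (norm (\<Sum>k<n. G k x))\<^sup>2"
  define \<sigma> where "\<sigma> = (\<Sum>k<n. (norm (G k y))\<^sup>2)"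
  define N where "N = (norm (\<Sum>k<n. G k y))\<^sup>2"
  have "0 \<le> D"
    unfolding D_def using bregman_nonneg[OF convex deriv] by (intro sum_nonneg) auto
  have A: "A \<le> 6 * L * D + 3 / 2 * \<sigma>"
    unfolding A_def D_def \<sigma>_def
    by (rule gradient_moments_le_bregman(1)[OF deriv convex lipschitz \<open>L > 0\<close>])
  have B: "B \<le> 4 * real n * L * D + 2 * N"
    unfolding B_def D_def N_def
    by (rule gradient_moments_le_bregman(2)[OF deriv convex lipschitz \<open>L > 0\<close>])
  have "(1 / real n) * (\<Sum>i<n. measure_pmf.expectation (unif_perm n)
             (\<lambda>\<pi>. (norm (x - local_iter \<gamma> G \<pi> x i))\<^sup>2))
      \<le> (1 / real n) * (\<gamma>\<^sup>2 * (4 / 3 * (real n - 1) * A + 8 / 9 * real n * B))"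
    using sum_expectation_local_iter_deviation_le[of n G L \<gamma> x] lipschitz assms(4-6) False
    by (intro mult_left_mono) (auto simp: A_def B_def)
  also have "\<dots> \<le> (1 / real n) * (\<gamma>\<^sup>2 * (8 * (real n)\<^sup>2 * (L * D) + 2 * real n * N + 2 * real n * \<sigma>))"
  proof -
    have "0 \<le> \<sigma>" "0 \<le> N"
      by (simp_all add: \<sigma>_def N_def sum_nonneg)
    with A B False \<open>L > 0\<close> \<open>0 \<le> D\<close> show ?thesis
      by (intro mult_left_mono shuffling_moment_combination_le) (auto simp: mult.assoc)
  qed
  also have "\<dots> = 8 * \<gamma>\<^sup>2 * (real n)\<^sup>2 * L * ((1 / real n) * D)
      + 2 * \<gamma>\<^sup>2 * (real n)\<^sup>2 * (norm ((1 / real n) *\<^sub>R (\<Sum>k<n. G k y)))\<^sup>2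
      + 2 * \<gamma>\<^sup>2 * real n * ((1 / real n) * \<sigma>)"
    using False by (simp add: N_def power_mult_distrib power2_eq_square field_simps)
  finally show ?thesis
    by (simp add: D_def \<sigma>_def)
qed simp

theorem mainTheorem6:
  fixes f :: "nat \<Rightarrow> nat \<Rightarrow> 'a::euclidean_space \<Rightarrow> real"
    and g :: "nat \<Rightarrow> nat \<Rightarrow> 'a \<Rightarrow> 'a"
    and M n :: nat and L \<gamma> :: real and xt xs :: 'a
  assumes M_pos: "M \<ge> 1" and n_pos: "n \<ge> 1" and L_pos: "L > 0"
    and grad: "\<And>m i x. m < M \<Longrightarrow> i < n \<Longrightarrow>
                 (f m i has_derivative (\<lambda>h. g m i x \<bullet> h)) (at x)"
    and cvx: "\<And>m i. m < M \<Longrightarrow> i < n \<Longrightarrow> convex_on UNIV (f m i)"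
    and smooth: "\<And>m i x y. m < M \<Longrightarrow> i < n \<Longrightarrow>
                 norm (g m i x - g m i y) \<le> L * norm (x - y)"
    and minimizer: "\<And>y. (1 / real M) * (\<Sum>m<M. (1 / real n) * (\<Sum>i<n. f m i xs))
                       \<le> (1 / real M) * (\<Sum>m<M. (1 / real n) * (\<Sum>i<n. f m i y))"
    and gamma_pos: "\<gamma> > 0" and gamma_le: "\<gamma> \<le> 1 / (2 * L * real n)"
  shows "(1 / (real M * real n)) *
           (\<Sum>m<M. \<Sum>i<n. measure_pmf.expectation (unif_perm n)
               (\<lambda>\<pi>. (norm (xt - local_iter \<gamma> (g m) \<pi> xt i))\<^sup>2))
         \<le> 8 * \<gamma>\<^sup>2 * (real n)\<^sup>2 * L *
              ((1 / real M) * (\<Sum>m<M. (1 / real n) * (\<Sum>i<n. f m i xt))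
               - (1 / real M) * (\<Sum>m<M. (1 / real n) * (\<Sum>i<n. f m i xs)))
           + 2 * \<gamma>\<^sup>2 * (real n)\<^sup>2 * ((1 / real M) *
                (\<Sum>m<M. (norm ((1 / real n) *\<^sub>R (\<Sum>i<n. g m i xs)))\<^sup>2))
           + 2 * \<gamma>\<^sup>2 * real n * ((1 / real M) *
                (\<Sum>m<M. (1 / real n) * (\<Sum>i<n. (norm (g m i xs))\<^sup>2)))"
    (is "?lhs \<le> ?rhs")
proof -
  define F where "F y = (1 / real M) * (\<Sum>m<M. (1 / real n) * (\<Sum>i<n. f m i y))" for y
  define GF where "GF y = (1 / real M) *\<^sub>R (\<Sum>m<M. (1 / real n) *\<^sub>R (\<Sum>i<n. g m i y))" for y
  define E where "E m = (1 / real n) * (\<Sum>i<n. measure_pmf.expectation (unif_perm n)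
                    (\<lambda>\<pi>. (norm (xt - local_iter \<gamma> (g m) \<pi> xt i))\<^sup>2))" for m
  define b where "b m = (1 / real n) * (\<Sum>i<n. bregman (f m i) (g m i) xt xs)" for m
  define N where "N m = (norm ((1 / real n) *\<^sub>R (\<Sum>i<n. g m i xs)))\<^sup>2" for m
  define \<sigma> where "\<sigma> m = (1 / real n) * (\<Sum>i<n. (norm (g m i xs))\<^sup>2)" for m
  have "(F has_derivative (\<lambda>v. GF xs \<bullet> v)) (at xs)"
    unfolding F_def GF_def
    by (auto intro!: derivative_eq_intros grad simp: inner_sum_left sum_distrib_left)
  then have "bregman F GF xt xs = F xt - F xs"
    by (rule bregman_eq_gap_at_minimum) (unfold F_def, rule minimizer)
  moreover have "bregman F GF xt xs = (1 / real M) * (\<Sum>m<M. b m)"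
    by (simp add: b_def F_def GF_def bregman_def sum_subtractf inner_sum_left sum_distrib_left
        diff_divide_distrib sum_divide_distrib mult.commute)
  ultimately have bregman_avg: "(1 / real M) * (\<Sum>m<M. b m) = F xt - F xs"
    by simp
  have "\<gamma> * L * real n \<le> 1 / 2"
    using gamma_le L_pos n_pos by (simp add: field_simps)
  then have client: "E m \<le> 8 * \<gamma>\<^sup>2 * (real n)\<^sup>2 * L * b m + 2 * \<gamma>\<^sup>2 * (real n)\<^sup>2 * N m
      + 2 * \<gamma>\<^sup>2 * real n * \<sigma> m" if "m < M" for m
    unfolding E_def b_def N_def \<sigma>_def using gamma_pos L_pos
    by (intro expectation_local_iter_deviation_le_bregman grad cvx smooth that) auto
  have "?lhs = (1 / real M) * (\<Sum>m<M. E m)"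
    by (simp add: E_def sum_distrib_left)
  also have "\<dots> \<le> (1 / real M) * (\<Sum>m<M. 8 * \<gamma>\<^sup>2 * (real n)\<^sup>2 * L * b m
      + 2 * \<gamma>\<^sup>2 * (real n)\<^sup>2 * N m + 2 * \<gamma>\<^sup>2 * real n * \<sigma> m)"
    using client by (intro mult_left_mono sum_mono) auto
  also have "\<dots> = 8 * \<gamma>\<^sup>2 * (real n)\<^sup>2 * L * ((1 / real M) * (\<Sum>m<M. b m))
      + 2 * \<gamma>\<^sup>2 * (real n)\<^sup>2 * ((1 / real M) * (\<Sum>m<M. N m))
      + 2 * \<gamma>\<^sup>2 * real n * ((1 / real M) * (\<Sum>m<M. \<sigma> m))"
    unfolding sum.distrib sum_distrib_left[symmetric] by (simp add: algebra_simps)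
  also have "\<dots> = ?rhs"
    unfolding bregman_avg F_def N_def \<sigma>_def ..
  finally show ?thesis .
qed

end
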